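(* Let $V$ be a real Lorentzian vector space (signature $(1,q)$) of dimension $m=1+q\ge3$, and let $\nabla R$ be a covariant derivative algebraic curvature tensor on $V$. If $\operatorname{trace}\{\mathcal{S}_{\nabla R}(x)^2\}$ is constant for $x\in S^-(V)$, then $\mathcal{S}_{\nabla R}(x)=0$ for all $x\in V$.
   Context: A covariant derivative algebraic curvature tensor is $\nabla R\in\otimes^5V^*$ satisfying $\nabla R(a,b,c,d;e)=-\nabla R(b,a,c,d;e)=\nabla R(c,d,a,b;e)$, $\nabla R(a,b,c,d;e)+\nabla R(a,c,d,b;e)+\nabla R(a,d,b,c;e)=0$, and $\nabla R(a,b,c,d;e)+\nabla R(a,b,d,e;c)+\nabla R(a,b,e,c;d)=0$. The Szab\'o operator is defined by $(\mathcal{S}_{\nabla R}(x)y,w)=\nabla R(y,x,x,w;x)$. $S^-(V)=\{v\in V:(v,v)=-1\}$ is the set of unit timelike vectors. *)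

theory Defs
  imports "HOL-Analysis.Analysis"
begin

definition lorentzian :: "(real^'n \<Rightarrow> real^'n \<Rightarrow> real) \<Rightarrow> bool" where
  "lorentzian g \<longleftrightarrow>
     (\<forall>y. linear (\<lambda>x. g x y)) \<and> (\<forall>x y. g x y = g y x) \<and>
     (\<exists>(e :: 'n \<Rightarrow> real^'n) i0.
        independent (range e) \<and> inj e \<and> span (range e) = UNIV \<and>
        (\<forall>i j. g (e i) (e j) = (if i = j then (if i = i0 then -1 else 1) else 0)))"

definition multilinear5 ::
  "(real^'n \<Rightarrow> real^'n \<Rightarrow> real^'n \<Rightarrow> real^'n \<Rightarrow> real^'n \<Rightarrow> real) \<Rightarrow> bool" where
  "multilinear5 T \<longleftrightarrow>
     (\<forall>b c d e. linear (\<lambda>a. T a b c d e)) \<and>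
     (\<forall>a c d e. linear (\<lambda>b. T a b c d e)) \<and>
     (\<forall>a b d e. linear (\<lambda>c. T a b c d e)) \<and>
     (\<forall>a b c e. linear (\<lambda>d. T a b c d e)) \<and>
     (\<forall>a b c d. linear (\<lambda>e. T a b c d e))"

(* covariant derivative algebraic curvature tensor; DR a b c d e = nabla R(a,b,c,d;e) *)
definition cov_deriv_acT ::
  "(real^'n \<Rightarrow> real^'n \<Rightarrow> real^'n \<Rightarrow> real^'n \<Rightarrow> real^'n \<Rightarrow> real) \<Rightarrow> bool" where
  "cov_deriv_acT DR \<longleftrightarrow> multilinear5 DR \<and>
     (\<forall>a b c d e. DR a b c d e = - DR b a c d e) \<and>
     (\<forall>a b c d e. DR a b c d e = DR c d a b e) \<and>
     (\<forall>a b c d e. DR a b c d e + DR a c d b e + DR a d b c e = 0) \<and>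
     (\<forall>a b c d e. DR a b c d e + DR a b d e c + DR a b e c d = 0)"

definition szabo ::
  "(real^'n \<Rightarrow> real^'n \<Rightarrow> real) \<Rightarrow>
   (real^'n \<Rightarrow> real^'n \<Rightarrow> real^'n \<Rightarrow> real^'n \<Rightarrow> real^'n \<Rightarrow> real) \<Rightarrow>
   real^'n \<Rightarrow> (real^'n \<Rightarrow> real^'n)" where
  "szabo g DR x = (THE f. linear f \<and> (\<forall>y w. g (f y) w = DR y x x w x))"

definition lin_trace :: "(real^'n \<Rightarrow> real^'n) \<Rightarrow> real" where
  "lin_trace f = trace (matrix f)"

end

theory Submission
  imports Defs "HOL-Computational_Algebra.Polynomial"
begin

(* Write F(x) = tr(S(x)^2).  In a g-orthonormal frame with timelike e_0 the matrix
   M(x)_bj = nabla R(e_b,x,x,e_j;x) is symmetric with x in its kernel, and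
   F(x) = sum_bj eps_b eps_j M(x)_bj^2 is homogeneous of degree 6.  So F = c on S^-(V) gives
   F(x) = c (-g(x,x))^3 on the timelike cone, and by polynomiality along lines through e_0 also
   on the null cone, where F = 0.

   For a symmetric matrix annihilating a causal vector, sum eps_b eps_j M_bj^2 dominates a sum
   of squares: for a timelike vector its vanishing forces M = 0, for a null vector it forces M
   to vanish on the orthogonal complement of the vector and e_0.  Applied to the null vectors
   e_0 +- u this gives linear relations between the Taylor coefficients P_k of
   r |-> nabla R(y, e_0 + r u, e_0 + r u, w; e_0 + r u).  Inserted into the r^2-coefficient of
   F(e_0 + r e_k) = c (1 - r^2)^3 and summed over the spacelike e_k, they give
   sum P_1^2 + q c = 0, hence c = 0.  Then S(x) = 0 for timelike x, and for every x because the
   cubic t |-> nabla R(y, e_0 + t x, e_0 + t x, w; e_0 + t x) vanishes for small t. *)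

lemma poly_eq_0_if_vanishes_on_interval:
  fixes p :: "real poly"
  assumes "a < b" and "\<And>x. a < x \<Longrightarrow> x < b \<Longrightarrow> poly p x = 0"
  shows "p = 0"
proof (rule ccontr)
  assume "p \<noteq> 0"
  then have "finite {x. poly p x = 0}" by (rule poly_roots_finite)
  moreover have "{a<..<b} \<subseteq> {x. poly p x = 0}" using assms(2) by auto
  ultimately show False using infinite_Ioo[OF assms(1)] finite_subset by blast
qed

lemma poly_cubic_square:
  "poly ([:a, b, c, d:]^2) r = (a + r * b + r\<^sup>2 * c + r^3 * (d::real))\<^sup>2"
  by (simp add: algebra_simps power2_eq_square eval_nat_numeral)

lemma coeff_cubic_square_2: "coeff ([:a, b, c, d:]^2) 2 = b\<^sup>2 + 2 * a * (c::real)"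
  by (simp add: power2_eq_square coeff_mult numeral_2_eq_2 atMost_Suc algebra_simps)

section \<open>Symmetric matrices annihilating a causal vector\<close>

definition eps :: "'a \<Rightarrow> 'a \<Rightarrow> real" where
  "eps i0 i = (if i = i0 then -1 else 1)"

lemma eps_times_self [simp]: "eps i0 i * eps i0 i = 1" "eps i0 i * (eps i0 i * x) = x"
  by (simp_all add: eps_def)

lemma sum_split_at: "(\<Sum>i\<in>UNIV. h i) = h i0 + (\<Sum>i\<in>-{i0::'a::finite}. h i)"
  by (simp add: sum.remove[of UNIV i0] Compl_eq_Diff_UNIV)

lemma sum_eps: "(\<Sum>i\<in>UNIV. eps i0 i * h i) = - h i0 + (\<Sum>i\<in>-{i0::'a::finite}. h i)"
proof -
  have "(\<Sum>i\<in>-{i0}. eps i0 i * h i) = (\<Sum>i\<in>-{i0}. h i)"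
    by (rule sum.cong) (auto simp: eps_def)
  then show ?thesis by (simp add: sum_split_at[of _ i0] eps_def)
qed

lemma sum_eps_eps:
  "(\<Sum>b\<in>UNIV. \<Sum>j\<in>UNIV. eps i0 b * eps i0 j * f b j)
   = f i0 i0 - (\<Sum>j\<in>-{i0::'a::finite}. f i0 j) - (\<Sum>b\<in>-{i0}. f b i0) + (\<Sum>b\<in>-{i0}. \<Sum>j\<in>-{i0}. f b j)"
proof -
  have "(\<Sum>b\<in>UNIV. \<Sum>j\<in>UNIV. eps i0 b * eps i0 j * f b j) = (\<Sum>b\<in>UNIV. eps i0 b * (\<Sum>j\<in>UNIV. eps i0 j * f b j))"
    by (simp add: sum_distrib_left mult.assoc)
  also have "\<dots> = - (- f i0 i0 + (\<Sum>j\<in>-{i0}. f i0 j)) + (\<Sum>b\<in>-{i0}. - f b i0 + (\<Sum>j\<in>-{i0}. f b j))"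
    by (simp only: sum_eps)
  finally show ?thesis by (simp add: sum.distrib sum_negf sum_subtractf)
qed

lemma double_sum_squares_eq_0:
  fixes f :: "'a::finite \<Rightarrow> 'b::finite \<Rightarrow> real"
  assumes "(\<Sum>k\<in>UNIV. \<Sum>l\<in>UNIV. (f k l)\<^sup>2) = 0"
  shows "f k l = 0"
proof -
  have "(\<Sum>l\<in>UNIV. (f k l)\<^sup>2) = 0"
    using assms by (simp add: sum_nonneg sum_nonneg_eq_0_iff)
  then show ?thesis by (simp add: sum_nonneg_eq_0_iff)
qed

lemma sum_sq_sym_rank2:
  fixes v w :: "'a::finite \<Rightarrow> real"
  defines "vv \<equiv> \<Sum>k\<in>UNIV. v k * v k" and "vw \<equiv> \<Sum>k\<in>UNIV. v k * w k" and "ww \<equiv> \<Sum>k\<in>UNIV. w k * w k"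
  shows "(\<Sum>k\<in>UNIV. \<Sum>l\<in>UNIV. (v k * w l + w k * v l - t * v k * v l)\<^sup>2)
       = 2 * vv * ww + 2 * vw\<^sup>2 + t\<^sup>2 * vv\<^sup>2 - 4 * t * vw * vv"
proof -
  have square: "(v k * w l + w k * v l - t * v k * v l)\<^sup>2
      = (v k * v k) * (w l * w l) + (w k * w k) * (v l * v l) + 2 * ((v k * w k) * (v l * w l))
        + t\<^sup>2 * ((v k * v k) * (v l * v l)) - 2 * t * ((v k * v k) * (v l * w l))
        - 2 * t * ((v k * w k) * (v l * v l))" for k l
    by (simp add: power2_eq_square algebra_simps)
  have "(\<Sum>k\<in>UNIV. \<Sum>l\<in>UNIV. (v k * w l + w k * v l - t * v k * v l)\<^sup>2)
      = vv * ww + ww * vv + 2 * (vw * vw) + t\<^sup>2 * (vv * vv) - 2 * t * (vv * vw) - 2 * t * (vw * vv)"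
    unfolding square vv_def vw_def ww_def
    by (simp only: sum.distrib sum_subtractf flip: sum_distrib_left sum_distrib_right)
  then show ?thesis by (simp add: power2_eq_square algebra_simps)
qed

lemma sum_sym_times_rank2:
  fixes N :: "'a::finite \<Rightarrow> 'a \<Rightarrow> real"
  assumes sym: "\<And>k l. N k l = N l k"
    and w_eq: "\<And>l. w l = (\<Sum>k\<in>UNIV. v k * N k l)"
    and t_eq: "t = (\<Sum>k\<in>UNIV. v k * w k)"
  shows "(\<Sum>k\<in>UNIV. \<Sum>l\<in>UNIV. N k l * (v k * w l + w k * v l - t * v k * v l))
       = 2 * (\<Sum>l\<in>UNIV. w l * w l) - t\<^sup>2"
proof -
  have w_row: "w k = (\<Sum>l\<in>UNIV. N k l * v l)" for k
    unfolding w_eq by (rule sum.cong) (simp_all add: sym mult.commute)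
  have "(\<Sum>k\<in>UNIV. \<Sum>l\<in>UNIV. N k l * (v k * w l)) = (\<Sum>l\<in>UNIV. w l * w l)"
    by (subst sum.swap) (simp add: w_eq sum_distrib_right mult_ac)
  moreover have "(\<Sum>k\<in>UNIV. \<Sum>l\<in>UNIV. N k l * (w k * v l)) = (\<Sum>l\<in>UNIV. w l * w l)"
    by (simp add: w_row sum_distrib_left mult_ac)
  moreover have "(\<Sum>k\<in>UNIV. \<Sum>l\<in>UNIV. N k l * (t * v k * v l)) = t * (\<Sum>k\<in>UNIV. v k * w k)"
    by (simp add: w_row sum_distrib_left mult_ac)
  ultimately show ?thesis
    by (simp add: algebra_simps sum.distrib sum_subtractf power2_eq_square flip: t_eq)
qed

lemma sum_sq_rank2_update:
  fixes N :: "'a::finite \<Rightarrow> 'a \<Rightarrow> real"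
  assumes sym: "\<And>k l. N k l = N l k"
    and w_eq: "\<And>l. w l = (\<Sum>k\<in>UNIV. v k * N k l)"
    and t_eq: "t = (\<Sum>k\<in>UNIV. v k * w k)"
  defines "vv \<equiv> \<Sum>k\<in>UNIV. v k * v k"
  shows "(\<Sum>k\<in>UNIV. \<Sum>l\<in>UNIV. (N k l - (v k * w l + w k * v l - t * v k * v l))\<^sup>2)
       = (\<Sum>k\<in>UNIV. \<Sum>l\<in>UNIV. (N k l)\<^sup>2) - 2 * (2 - vv) * (\<Sum>l\<in>UNIV. w l * w l) + (2 - vv)\<^sup>2 * t\<^sup>2"
proof -
  have "(N k l - R)\<^sup>2 = (N k l)\<^sup>2 - 2 * (N k l * R) + R\<^sup>2" for k l and R :: real
    by (simp add: power2_eq_square algebra_simps)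
  then have "(\<Sum>k\<in>UNIV. \<Sum>l\<in>UNIV. (N k l - (v k * w l + w k * v l - t * v k * v l))\<^sup>2)
      = (\<Sum>k\<in>UNIV. \<Sum>l\<in>UNIV. (N k l)\<^sup>2)
        - 2 * (\<Sum>k\<in>UNIV. \<Sum>l\<in>UNIV. N k l * (v k * w l + w k * v l - t * v k * v l))
        + (\<Sum>k\<in>UNIV. \<Sum>l\<in>UNIV. (v k * w l + w k * v l - t * v k * v l)\<^sup>2)"
    by (simp add: sum.distrib sum_subtractf sum_distrib_left)
  also have "\<dots> = (\<Sum>k\<in>UNIV. \<Sum>l\<in>UNIV. (N k l)\<^sup>2) - 2 * (2 - vv) * (\<Sum>l\<in>UNIV. w l * w l) + (2 - vv)\<^sup>2 * t\<^sup>2"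
    unfolding sum_sym_times_rank2[OF assms(1-3)] sum_sq_sym_rank2 t_eq[symmetric] vv_def
    by (simp add: power2_eq_square algebra_simps)
  finally show ?thesis .
qed

locale sym_matrix_kernel =
  fixes M :: "'a::finite \<Rightarrow> 'a \<Rightarrow> real" and a :: "'a \<Rightarrow> real" and i0 :: 'a
  assumes M_sym: "M b j = M j b"
    and kernel: "(\<Sum>b\<in>UNIV. a b * M b j) = 0"
    and a_i0: "a i0 \<noteq> 0"
begin

definition v :: "'a \<Rightarrow> real" where "v k = (if k = i0 then 0 else a k / a i0)"
definition N :: "'a \<Rightarrow> 'a \<Rightarrow> real" where "N k l = (if k = i0 \<or> l = i0 then 0 else M k l)"
definition w :: "'a \<Rightarrow> real" where "w l = (\<Sum>k\<in>UNIV. v k * N k l)"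
definition t :: real where "t = (\<Sum>k\<in>UNIV. v k * w k)"

lemma N_sym: "N k l = N l k"
  by (auto simp: N_def M_sym)

lemma sum_v_sq: "(\<Sum>k\<in>UNIV. v k * v k) = (\<Sum>k\<in>-{i0}. (a k)\<^sup>2) / (a i0)\<^sup>2"
  by (simp add: sum_split_at[of _ i0] v_def sum_divide_distrib power2_eq_square)

lemma sum_times_v: "y i0 = 0 \<Longrightarrow> (\<Sum>k\<in>UNIV. y k * v k) = (\<Sum>k\<in>UNIV. y k * a k) / a i0"
  by (simp add: sum_split_at[of _ i0] v_def sum_divide_distrib)

lemma M_i0_row: "M i0 j = - (\<Sum>b\<in>UNIV. v b * M b j)"
proof -
  have "a b * M b j = a i0 * ((if b = i0 then M b j else 0) + v b * M b j)" for b
    using a_i0 by (simp add: v_def)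
  then have "0 = (\<Sum>b\<in>UNIV. a i0 * ((if b = i0 then M b j else 0) + v b * M b j))"
    using kernel[of j] by simp
  also have "\<dots> = a i0 * (M i0 j + (\<Sum>b\<in>UNIV. v b * M b j))"
    by (simp add: sum.distrib flip: sum_distrib_left)
  finally show ?thesis using a_i0 by simp
qed

lemma M_block_form:
  "M b j = (if b = i0 then if j = i0 then t else - w j else if j = i0 then - w b else N b j)"
proof -
  have row: "M i0 j = - w j" if "j \<noteq> i0" for j
  proof -
    have "(\<Sum>b\<in>UNIV. v b * M b j) = w j"
      unfolding w_def by (rule sum.cong) (auto simp: N_def v_def that)
    then show ?thesis by (simp add: M_i0_row)
  qed
  have "v b * M b i0 = - (v b * w b)" for b
    by (cases "b = i0") (simp_all add: v_def M_sym[of b i0] row)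
  then have "M i0 i0 = t" using M_i0_row[of i0] by (simp add: t_def sum_negf)
  moreover have "M b i0 = - w b" if "b \<noteq> i0"
    using row[OF that] M_sym[of b i0] by simp
  ultimately show ?thesis by (simp add: row N_def)
qed

lemma w_i0: "w i0 = 0"
  by (simp add: w_def N_def)

lemma lorentz_sum_sq_block:
  "(\<Sum>b\<in>UNIV. \<Sum>j\<in>UNIV. eps i0 b * eps i0 j * (M b j)\<^sup>2)
   = (\<Sum>k\<in>UNIV. \<Sum>l\<in>UNIV. (N k l)\<^sup>2) - 2 * (\<Sum>l\<in>UNIV. w l * w l) + t\<^sup>2"
proof -
  have "(\<Sum>k\<in>UNIV. \<Sum>l\<in>UNIV. (N k l)\<^sup>2) = (\<Sum>k\<in>-{i0}. \<Sum>l\<in>-{i0}. (M k l)\<^sup>2)"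
    by (simp add: sum_split_at[of _ i0] N_def)
  moreover have "(\<Sum>j\<in>-{i0}. (M i0 j)\<^sup>2) = (\<Sum>l\<in>UNIV. w l * w l)"
    and "(\<Sum>b\<in>-{i0}. (M b i0)\<^sup>2) = (\<Sum>l\<in>UNIV. w l * w l)"
    by (simp_all add: sum_split_at[of "\<lambda>l. w l * w l" i0] w_i0 M_block_form power2_eq_square)
  moreover have "M i0 i0 = t" by (simp add: M_block_form)
  ultimately show ?thesis by (simp add: sum_eps_eps)
qed

lemma M_eq_0_if_timelike:
  assumes timelike: "(\<Sum>k\<in>-{i0}. (a k)\<^sup>2) < (a i0)\<^sup>2"
    and lorentz_0: "(\<Sum>b\<in>UNIV. \<Sum>j\<in>UNIV. eps i0 b * eps i0 j * (M b j)\<^sup>2) = 0"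
  shows "M b j = 0"
proof -
  define s where "s = 1 - (\<Sum>k\<in>UNIV. v k * v k)"
  define W where "W = (\<Sum>l\<in>UNIV. w l * w l)"
  define Ns where "Ns = (\<Sum>k\<in>UNIV. \<Sum>l\<in>UNIV. (N k l)\<^sup>2)"
  define Q where "Q = (\<Sum>k\<in>UNIV. \<Sum>l\<in>UNIV. (N k l - (v k * w l + w k * v l - t * v k * v l))\<^sup>2)"
  have s: "s > 0" using timelike a_i0 by (simp add: s_def sum_v_sq)
  have "W \<ge> 0" "Q \<ge> 0" unfolding W_def Q_def by (simp_all add: sum_nonneg)
  have Ns: "Ns = 2 * W - t\<^sup>2"
    using lorentz_sum_sq_block lorentz_0 unfolding Ns_def W_def by simp
  have "Q = Ns - 2 * (1 + s) * W + (1 + s)\<^sup>2 * t\<^sup>2"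
    using sum_sq_rank2_update[OF N_sym w_def t_def] unfolding Q_def Ns_def W_def s_def by simp
  then have Q: "Q = - 2 * s * W + s * (2 + s) * t\<^sup>2"
    using Ns by (simp add: power2_eq_square algebra_simps)
  \<comment> \<open>Cauchy-Schwarz bounds \<open>t\<^sup>2\<close> by \<open>(1 - s) W\<close>, which makes \<open>Q\<close> at most \<open>-s\<^sup>2 (1 + s) W\<close>\<close>
  have "t\<^sup>2 \<le> (1 - s) * W"
    using Cauchy_Schwarz_ineq_sum[of v w UNIV]
    by (simp add: t_def s_def W_def power2_eq_square)
  then have "s * (2 + s) * t\<^sup>2 \<le> s * (2 + s) * ((1 - s) * W)"
    using s by (intro mult_left_mono) simp_all
  then have "s * s * (1 + s) * W \<le> 0"
    using \<open>Q \<ge> 0\<close> Q by (simp add: algebra_simps)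
  moreover have "s * s * (1 + s) > 0" using s by simp
  ultimately have "W = 0"
    using \<open>W \<ge> 0\<close> s by (simp add: mult_le_0_iff)
  then have w0: "w l = 0" for l
    by (simp add: W_def sum_nonneg_eq_0_iff)
  then have "t = 0" by (simp add: t_def)
  then have "N k l = 0" for k l
    using Ns \<open>W = 0\<close> double_sum_squares_eq_0[of N] by (simp add: Ns_def)
  then show ?thesis using w0 \<open>t = 0\<close> by (simp add: M_block_form)
qed

lemma M_vanishes_on_orthogonal_if_null:
  assumes null: "(\<Sum>k\<in>-{i0}. (a k)\<^sup>2) = (a i0)\<^sup>2"
    and lorentz_0: "(\<Sum>b\<in>UNIV. \<Sum>j\<in>UNIV. eps i0 b * eps i0 j * (M b j)\<^sup>2) = 0"
    and y: "y i0 = 0" "(\<Sum>k\<in>UNIV. y k * a k) = 0"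
    and y': "y' i0 = 0" "(\<Sum>k\<in>UNIV. y' k * a k) = 0"
  shows "(\<Sum>k\<in>UNIV. \<Sum>l\<in>UNIV. y k * y' l * M k l) = 0"
proof -
  have "(\<Sum>k\<in>UNIV. v k * v k) = 1" using null a_i0 by (simp add: sum_v_sq)
  then have "(\<Sum>k\<in>UNIV. \<Sum>l\<in>UNIV. (N k l - (v k * w l + w k * v l - t * v k * v l))\<^sup>2) = 0"
    using sum_sq_rank2_update[OF N_sym w_def t_def] lorentz_sum_sq_block lorentz_0
    by (simp add: power2_eq_square)
  from double_sum_squares_eq_0[OF this]
  have N: "N k l = v k * w l + w k * v l - t * v k * v l" for k l
    by simp
  have yv: "(\<Sum>k\<in>UNIV. y k * v k) = 0" and y'v: "(\<Sum>l\<in>UNIV. y' l * v l) = 0"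
    using y y' by (simp_all add: sum_times_v)
  have row: "y k * (\<Sum>l\<in>UNIV. y' l * M k l) = y k * v k * (\<Sum>l\<in>UNIV. y' l * w l)" for k
  proof (cases "k = i0")
    case False
    have "(\<Sum>l\<in>UNIV. y' l * M k l) = (\<Sum>l\<in>UNIV. y' l * N k l)"
      by (rule sum.cong) (auto simp: N_def y' False)
    also have "\<dots> = v k * (\<Sum>l\<in>UNIV. y' l * w l) + (w k - t * v k) * (\<Sum>l\<in>UNIV. y' l * v l)"
      by (simp add: N sum.distrib sum_subtractf sum_distrib_left algebra_simps)
    finally show ?thesis by (simp add: y'v)
  qed (simp add: y)
  have "(\<Sum>k\<in>UNIV. \<Sum>l\<in>UNIV. y k * y' l * M k l) = (\<Sum>k\<in>UNIV. y k * v k) * (\<Sum>l\<in>UNIV. y' l * w l)"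
    by (simp add: mult.assoc row sum_distrib_right flip: sum_distrib_left)
  then show ?thesis by (simp add: yv)
qed

end

section \<open>Orthonormal frames of a Lorentzian form\<close>

locale lorentz_frame =
  fixes g :: "real^'n \<Rightarrow> real^'n \<Rightarrow> real" and e :: "'n \<Rightarrow> real^'n" and i0 :: 'n
  assumes linear_g: "linear (\<lambda>x. g x y)"
    and g_commute: "g x y = g y x"
    and span_frame: "span (range e) = UNIV"
    and inj_frame: "inj e"
    and g_frame: "g (e i) (e j) = (if i = j then eps i0 i else 0)"
begin

lemmas g_add_left = linear_add[OF linear_g]
lemmas g_scale_left = linear_scale[OF linear_g]
lemmas g_diff_left = linear_diff[OF linear_g]
lemmas g_sum_left = linear_sum[OF linear_g]

lemma g_add_right: "g y (a + b) = g y a + g y b"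
  by (simp add: g_commute[of y] g_add_left)

lemma g_scale_right: "g y (r *\<^sub>R a) = r * g y a"
  by (simp add: g_commute[of y] g_scale_left)

lemma g_diff_right: "g y (a - b) = g y a - g y b"
  by (simp add: g_commute[of y] g_diff_left)

abbreviation X :: "real^'n" where "X \<equiv> e i0"

lemma g_X_X: "g X X = -1"
  by (simp add: g_frame eps_def)

definition coord :: "real^'n \<Rightarrow> 'n \<Rightarrow> real" where
  "coord x i = eps i0 i * g x (e i)"

lemma frame_expansion: "x = (\<Sum>i\<in>UNIV. coord x i *\<^sub>R e i)"
proof -
  obtain u where u: "x = (\<Sum>y\<in>range e. u y *\<^sub>R y)"
    using span_finite[of "range e"] span_frame by auto
  then have x: "x = (\<Sum>i\<in>UNIV. u (e i) *\<^sub>R e i)"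
    by (simp add: sum.reindex[OF inj_frame])
  have "g x (e k) = u (e k) * eps i0 k" for k
  proof -
    have "g x (e k) = (\<Sum>i\<in>UNIV. u (e i) * g (e i) (e k))"
      by (subst x) (simp add: g_sum_left g_scale_left)
    also have "\<dots> = (\<Sum>i\<in>UNIV. if i = k then u (e k) * eps i0 k else 0)"
      by (rule sum.cong) (auto simp: g_frame)
    finally show ?thesis by simp
  qed
  then have "coord x k = u (e k)" for k
    by (simp add: coord_def mult.left_commute[of "eps i0 k"])
  then show ?thesis using x by simp
qed

lemma coord_frame: "coord (e j) i = (if i = j then 1 else 0)"
  by (simp add: coord_def g_frame)

lemma coord_scale: "coord (r *\<^sub>R x) i = r * coord x i"
  by (simp add: coord_def g_scale_left)

lemma coord_sum: "coord (sum h A) i = (\<Sum>j\<in>A. coord (h j) i)"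
  by (simp add: coord_def g_sum_left sum_distrib_left)

lemma g_in_coords: "g x y = (\<Sum>i\<in>UNIV. eps i0 i * coord x i * coord y i)"
proof -
  have "g x y = (\<Sum>i\<in>UNIV. coord x i * g (e i) y)"
    by (subst frame_expansion[of x]) (simp add: g_sum_left g_scale_left)
  also have "\<dots> = (\<Sum>i\<in>UNIV. eps i0 i * coord x i * coord y i)"
    by (rule sum.cong) (simp_all add: coord_def g_commute[of "e _"])
  finally show ?thesis .
qed

lemma g_self_in_coords: "g x x = (\<Sum>k\<in>-{i0}. (coord x k)\<^sup>2) - (coord x i0)\<^sup>2"
  by (simp add: g_in_coords mult.assoc sum_eps power2_eq_square)

lemma eq_0_if_orthogonal: "(\<And>w. g z w = 0) \<Longrightarrow> z = 0"
  by (subst frame_expansion) (simp add: coord_def)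

lemma coord_in_std_basis: "coord v b = (\<Sum>r\<in>UNIV. v $ r * coord (axis r 1) b)"
proof -
  have "v = (\<Sum>r\<in>UNIV. v $ r *\<^sub>R axis r (1::real))"
    using basis_expansion[of v] by (simp add: scalar_mult_eq_scaleR)
  then have "coord v b = coord (\<Sum>r\<in>UNIV. v $ r *\<^sub>R axis r (1::real)) b" by simp
  then show ?thesis by (simp only: coord_sum coord_scale)
qed

lemma lin_trace_in_frame:
  assumes "linear h"
  shows "lin_trace h = (\<Sum>b\<in>UNIV. coord (h (e b)) b)"
proof -
  define P :: "real^'n^'n" where "P = (\<chi> r b. e b $ r)"
  define Q :: "real^'n^'n" where "Q = (\<chi> b r. coord (axis r 1) b)"
  have "(Q ** P) $ b $ b' = coord (e b') b" for b b'
    by (simp add: matrix_matrix_mult_def P_def Q_def coord_in_std_basis[of "e b'"] mult.commute)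
  then have "Q ** P = mat 1"
    by (simp add: vec_eq_iff mat_def coord_frame)
  then have PQ: "P ** Q = mat 1" using matrix_left_right_inverse by blast
  have hP: "(matrix h ** P) $ r $ b = h (e b) $ r" for r b
  proof -
    have "(matrix h ** P) $ r $ b = (matrix h *v e b) $ r"
      by (simp add: matrix_matrix_mult_def matrix_vector_mult_def P_def)
    then show ?thesis by (simp add: matrix_works[OF assms[folded linear_matrix_vector_mul_eq]])
  qed
  have diag: "(Q ** (matrix h ** P)) $ b $ b = coord (h (e b)) b" for b
  proof -
    have "(Q ** (matrix h ** P)) $ b $ b = (\<Sum>r\<in>UNIV. Q $ b $ r * h (e b) $ r)"
      by (simp add: matrix_matrix_mult_def[of Q] hP)
    also have "\<dots> = coord (h (e b)) b"
      by (simp add: Q_def coord_in_std_basis[of "h (e b)"] mult.commute)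
    finally show ?thesis .
  qed
  have "lin_trace h = trace (matrix h ** (P ** Q))"
    by (simp add: lin_trace_def PQ)
  also have "\<dots> = trace (Q ** (matrix h ** P))"
    by (simp add: matrix_mul_assoc trace_mul_sym[of _ Q])
  also have "\<dots> = (\<Sum>b\<in>UNIV. coord (h (e b)) b)"
    by (simp add: trace_def diag)
  finally show ?thesis .
qed

lemma g_in_coords_if_orthogonal_X:
  assumes "g y X = 0"
  shows "g y z = (\<Sum>k\<in>UNIV. coord y k * coord z k)"
proof -
  have "coord y i0 = 0" using assms by (simp add: coord_def)
  have "g y z = (\<Sum>k\<in>-{i0}. coord y k * coord z k)"
    using sum_eps[of i0 "\<lambda>k. coord y k * coord z k"] \<open>coord y i0 = 0\<close>
    by (simp add: g_in_coords mult.assoc)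
  then show ?thesis
    using sum_split_at[of "\<lambda>k. coord y k * coord z k" i0] \<open>coord y i0 = 0\<close> by simp
qed

lemma timelike_near_X:
  obtains \<delta> where "\<delta> > 0" "\<And>t. \<bar>t\<bar> < \<delta> \<Longrightarrow> g (X + t *\<^sub>R x) (X + t *\<^sub>R x) < 0"
proof
  define K where "K = 2 * \<bar>g x (X)\<bar> + \<bar>g x x\<bar> + 1"
  have K: "K \<ge> 1" by (simp add: K_def)
  show "1 / K > 0" using K by simp
  fix t :: real assume t: "\<bar>t\<bar> < 1 / K"
  then have tK: "\<bar>t\<bar> * K < 1"
    using K by (simp add: field_simps)
  moreover have "\<bar>t\<bar> \<le> \<bar>t\<bar> * K"
    using mult_left_mono[OF K, of "\<bar>t\<bar>"] by simp
  ultimately have "\<bar>t\<bar> \<le> 1" by linarith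
  have lin: "2 * t * g x (X) \<le> 2 * \<bar>t\<bar> * \<bar>g x (X)\<bar>"
    by (simp add: abs_mult flip: mult.assoc) (metis abs_ge_self abs_mult)
  have quad: "t\<^sup>2 * g x x \<le> \<bar>t\<bar> * \<bar>g x x\<bar>"
  proof -
    have "t\<^sup>2 * g x x \<le> \<bar>t\<bar> * \<bar>t\<bar> * \<bar>g x x\<bar>"
      by (metis abs_ge_self abs_mult abs_mult_self_eq power2_eq_square)
    also have "\<dots> \<le> \<bar>t\<bar> * \<bar>g x x\<bar>"
      using \<open>\<bar>t\<bar> \<le> 1\<close> by (intro mult_right_mono) (use mult_left_le_one_le[of "\<bar>t\<bar>" "\<bar>t\<bar>"] in simp_all)
    finally show ?thesis .
  qed
  have "\<bar>t\<bar> * K = 2 * \<bar>t\<bar> * \<bar>g x (X)\<bar> + \<bar>t\<bar> * \<bar>g x x\<bar> + \<bar>t\<bar>"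
    by (simp add: K_def algebra_simps)
  moreover have "g (X + t *\<^sub>R x) (X + t *\<^sub>R x) = -1 + 2 * t * g x (X) + t\<^sup>2 * g x x"
    by (simp add: g_add_left g_add_right g_scale_left g_scale_right g_commute[of X x] g_frame eps_def
        power2_eq_square algebra_simps)
  ultimately show "g (X + t *\<^sub>R x) (X + t *\<^sub>R x) < 0"
    using tK lin quad by linarith
qed

end

section \<open>The Szabo operator in a frame\<close>

locale szabo_frame = lorentz_frame g e i0
  for g :: "real^'n \<Rightarrow> real^'n \<Rightarrow> real" and e :: "'n \<Rightarrow> real^'n" and i0 :: 'n +
  fixes DR :: "real^'n \<Rightarrow> real^'n \<Rightarrow> real^'n \<Rightarrow> real^'n \<Rightarrow> real^'n \<Rightarrow> real"
  assumes cov_deriv: "cov_deriv_acT DR"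
begin

lemma DR_linear:
  "linear (\<lambda>a. DR a b c d x)" "linear (\<lambda>b. DR a b c d x)" "linear (\<lambda>c. DR a b c d x)"
  "linear (\<lambda>d. DR a b c d x)" "linear (\<lambda>x. DR a b c d x)"
  using cov_deriv[unfolded cov_deriv_acT_def, THEN conjunct1] unfolding multilinear5_def by auto

lemmas DR_add = DR_linear[THEN linear_add]
lemmas DR_scale = DR_linear[THEN linear_scale]
lemmas DR_diff = DR_linear[THEN linear_diff]
lemmas DR_sum = DR_linear[THEN linear_sum]

lemma DR_antisym12: "DR b a c d x = - DR a b c d x"
proof -
  have "\<forall>a b c d x. DR a b c d x = - DR b a c d x"
    using cov_deriv unfolding cov_deriv_acT_def by blast
  then show ?thesis by (rule allE[of _ b]) simp
qed

lemma DR_pair_sym: "DR c d a b x = DR a b c d x"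
proof -
  have "\<forall>a b c d x. DR a b c d x = DR c d a b x"
    using cov_deriv unfolding cov_deriv_acT_def by blast
  then show ?thesis by (rule allE[of _ c]) simp
qed

lemma DR_antisym34: "DR a b d c x = - DR a b c d x"
  using DR_pair_sym[of a b d c x] DR_antisym12[of d c a b x] DR_pair_sym[of c d a b x] by simp

lemma DR_reverse: "DR d c b a x = DR a b c d x"
  using DR_antisym12[of c d b a x] DR_pair_sym[of b a c d x] DR_antisym12[of a b c d x] by simp

lemma DR_same12 [simp]: "DR a a c d x = 0"
  using DR_antisym12[of a a c d x] by linarith

lemma DR_same34 [simp]: "DR a b c c x = 0"
  using DR_antisym34[of a b c c x] by linarith

definition S :: "real^'n \<Rightarrow> real^'n \<Rightarrow> real^'n" where
  "S x y = (\<Sum>j\<in>UNIV. (eps i0 j * DR y x x (e j) x) *\<^sub>R e j)"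

lemma linear_S: "linear (S x)"
  by (rule linearI) (simp_all add: S_def DR_add DR_scale algebra_simps sum.distrib scaleR_sum_right)

lemma coord_S: "coord (S x y) j = eps i0 j * DR y x x (e j) x"
  by (simp add: S_def coord_sum coord_scale coord_frame if_distrib cong: if_cong)

lemma g_S: "g (S x y) w = DR y x x w x"
proof -
  have "g (S x y) w = (\<Sum>j\<in>UNIV. coord w j * DR y x x (e j) x)"
    by (simp add: g_in_coords coord_S mult_ac)
  also have "\<dots> = DR y x x w x"
    by (subst (2) frame_expansion[of w]) (simp add: DR_sum DR_scale)
  finally show ?thesis .
qed

lemma szabo_eq_S: "szabo g DR x = S x"
  unfolding szabo_def
proof (rule the_equality)
  show "linear (S x) \<and> (\<forall>y w. g (S x y) w = DR y x x w x)"
    using linear_S g_S by blast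
  fix f assume f: "linear f \<and> (\<forall>y w. g (f y) w = DR y x x w x)"
  show "f = S x"
  proof
    fix y
    have "g (f y - S x y) w = 0" for w using f by (simp add: g_diff_left g_S)
    then show "f y = S x y" using eq_0_if_orthogonal by fastforce
  qed
qed

definition szabo_mat :: "real^'n \<Rightarrow> 'n \<Rightarrow> 'n \<Rightarrow> real" where
  "szabo_mat x b j = DR (e b) x x (e j) x"

definition trS2 :: "real^'n \<Rightarrow> real" where
  "trS2 x = (\<Sum>b\<in>UNIV. \<Sum>j\<in>UNIV. eps i0 b * eps i0 j * (szabo_mat x b j)\<^sup>2)"

lemma szabo_mat_sym: "szabo_mat x b j = szabo_mat x j b"
  by (simp add: szabo_mat_def DR_reverse[of "e b"])

lemma DR_in_coords: "DR y x x w x = (\<Sum>k\<in>UNIV. \<Sum>l\<in>UNIV. coord y k * coord w l * szabo_mat x k l)"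
proof -
  have "DR y x x w x = DR (\<Sum>k\<in>UNIV. coord y k *\<^sub>R e k) x x (\<Sum>l\<in>UNIV. coord w l *\<^sub>R e l) x"
    by (simp flip: frame_expansion)
  also have "\<dots> = (\<Sum>l\<in>UNIV. \<Sum>k\<in>UNIV. coord w l * (coord y k * szabo_mat x k l))"
    by (simp add: DR_sum DR_scale szabo_mat_def sum_distrib_left)
  finally show ?thesis
    by (subst (asm) sum.swap) (simp add: mult_ac)
qed

lemma szabo_mat_kernel: "(\<Sum>b\<in>UNIV. coord x b * szabo_mat x b j) = 0"
proof -
  have "(\<Sum>b\<in>UNIV. coord x b * szabo_mat x b j) = DR (\<Sum>b\<in>UNIV. coord x b *\<^sub>R e b) x x (e j) x"
    by (simp add: DR_sum DR_scale szabo_mat_def)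
  then show ?thesis by (simp flip: frame_expansion)
qed

lemma lin_trace_szabo_sq: "lin_trace (szabo g DR x \<circ> szabo g DR x) = trS2 x"
proof -
  have "coord (S x (S x (e b))) b = (\<Sum>j\<in>UNIV. eps i0 b * eps i0 j * (szabo_mat x b j)\<^sup>2)" for b
  proof -
    have "coord (S x (S x (e b))) b = eps i0 b * DR (S x (e b)) x x (e b) x"
      by (simp add: coord_S)
    also have "DR (S x (e b)) x x (e b) x = (\<Sum>j\<in>UNIV. eps i0 j * szabo_mat x b j * szabo_mat x j b)"
      by (simp add: S_def DR_sum DR_scale szabo_mat_def)
    finally show ?thesis
      by (simp add: szabo_mat_sym[of x _ b] power2_eq_square sum_distrib_left mult_ac)
  qed
  then show ?thesis
    using lin_trace_in_frame[of "S x \<circ> S x"] linear_S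
    by (simp add: szabo_eq_S trS2_def linear_compose)
qed

lemma trS2_scale: "trS2 (r *\<^sub>R x) = r^6 * trS2 x"
proof -
  have "(szabo_mat (r *\<^sub>R x) b j)\<^sup>2 = r^6 * (szabo_mat x b j)\<^sup>2" for b j
    by (simp add: szabo_mat_def DR_scale power2_eq_square eval_nat_numeral)
  then show ?thesis by (simp add: trS2_def sum_distrib_left mult_ac)
qed

definition P0 :: "real^'n \<Rightarrow> real^'n \<Rightarrow> real" where
  "P0 y w = DR y X X w X"
definition P1 :: "real^'n \<Rightarrow> real^'n \<Rightarrow> real^'n \<Rightarrow> real" where
  "P1 u y w = DR y u X w X + DR y X u w X + DR y X X w u"
definition P2 :: "real^'n \<Rightarrow> real^'n \<Rightarrow> real^'n \<Rightarrow> real" where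
  "P2 u y w = DR y u u w X + DR y u X w u + DR y X u w u"
definition P3 :: "real^'n \<Rightarrow> real^'n \<Rightarrow> real^'n \<Rightarrow> real" where
  "P3 u y w = DR y u u w u"

lemma DR_along_line:
  "DR y (X + r *\<^sub>R u) (X + r *\<^sub>R u) w (X + r *\<^sub>R u)
   = P0 y w + r * P1 u y w + r\<^sup>2 * P2 u y w + r^3 * P3 u y w"
  by (simp add: P0_def P1_def P2_def P3_def DR_add DR_scale
      power2_eq_square eval_nat_numeral algebra_simps)

lemma P2_polarization:
  "2 * P0 (a + b) (a + b) + P2 (a - b) (a + b) (a + b) - (2 * P0 (a - b) (a - b) + P2 (a + b) (a - b) (a - b))
   = 8 * (P0 a b + P2 a a b + P2 b a b)"
  unfolding P0_def P2_def
  by (simp add: DR_add DR_diff) (smt (verit) DR_antisym12 DR_antisym34 DR_pair_sym)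

lemma DR_vanishes_if_timelike:
  assumes timelike: "g x x < 0" and trS2_0: "trS2 x = 0"
  shows "DR y x x w x = 0"
proof -
  have lt: "(\<Sum>k\<in>-{i0}. (coord x k)\<^sup>2) < (coord x i0)\<^sup>2"
    using timelike by (simp add: g_self_in_coords)
  then have "coord x i0 \<noteq> 0"
    using sum_nonneg[of "-{i0}" "\<lambda>k. (coord x k)\<^sup>2"] by auto
  then interpret K: sym_matrix_kernel "szabo_mat x" "coord x" i0
    by (intro sym_matrix_kernel.intro szabo_mat_sym szabo_mat_kernel)
  have "szabo_mat x k l = 0" for k l
    using K.M_eq_0_if_timelike[OF lt] trS2_0 by (simp add: trS2_def)
  then show ?thesis by (simp add: DR_in_coords)
qed

lemma DR_vanishes_on_orthogonal_if_null:
  assumes null: "g n n = 0" "g n X \<noteq> 0" and trS2_0: "trS2 n = 0"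
    and y: "g y X = 0" "g y n = 0" and w: "g w X = 0" "g w n = 0"
  shows "DR y n n w n = 0"
proof -
  have "coord n i0 \<noteq> 0" using null(2) by (simp add: coord_def eps_def)
  then interpret K: sym_matrix_kernel "szabo_mat n" "coord n" i0
    by (intro sym_matrix_kernel.intro szabo_mat_sym szabo_mat_kernel)
  have "(\<Sum>k\<in>UNIV. \<Sum>l\<in>UNIV. coord y k * coord w l * szabo_mat n k l) = 0"
  proof (rule K.M_vanishes_on_orthogonal_if_null)
    show "(\<Sum>k\<in>-{i0}. (coord n k)\<^sup>2) = (coord n i0)\<^sup>2"
      using null(1) by (simp add: g_self_in_coords)
    show "(\<Sum>b\<in>UNIV. \<Sum>j\<in>UNIV. eps i0 b * eps i0 j * (szabo_mat n b j)\<^sup>2) = 0"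
      using trS2_0 by (simp add: trS2_def)
    show "coord y i0 = 0" "coord w i0 = 0"
      using y w by (simp_all add: coord_def)
    show "(\<Sum>k\<in>UNIV. coord y k * coord n k) = 0" "(\<Sum>k\<in>UNIV. coord w k * coord n k) = 0"
      using y w by (simp_all flip: g_in_coords_if_orthogonal_X)
  qed
  then show ?thesis by (simp add: DR_in_coords)
qed

lemma P0_sym: "P0 y w = P0 w y"
  by (simp add: P0_def DR_reverse[of w])

lemma P0_X [simp]: "P0 X w = 0" "P0 y X = 0"
  by (simp_all add: P0_def)

lemma P1_X: "P1 u X w = - P0 u w" "P1 u y X = - P0 y u"
  by (simp_all add: P1_def P0_def DR_antisym12[of X u] DR_antisym34[of y X u])

lemma P2_diag [simp]: "P2 u u u = 0"
  by (simp add: P2_def)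

lemma P2_scale: "P2 (r *\<^sub>R u) y w = r\<^sup>2 * P2 u y w"
  by (simp add: P2_def DR_scale power2_eq_square algebra_simps)

end

section \<open>Constant trace on the unit hyperboloid\<close>

locale szabo_trace_const = szabo_frame g e i0 DR
  for g :: "real^'n \<Rightarrow> real^'n \<Rightarrow> real" and e :: "'n \<Rightarrow> real^'n" and i0 :: 'n and DR +
  fixes c :: real
  assumes trS2_const: "g x x = -1 \<Longrightarrow> trS2 x = c"
begin

lemma trS2_timelike: "g x x < 0 \<Longrightarrow> trS2 x = (- g x x)^3 * c"
proof -
  assume "g x x < 0"
  define t where "t = sqrt (- g x x)"
  have t: "t > 0" "t\<^sup>2 = - g x x" using \<open>g x x < 0\<close> by (simp_all add: t_def)
  have "g ((1 / t) *\<^sub>R x) ((1 / t) *\<^sub>R x) = -1"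
    using t \<open>g x x < 0\<close> by (simp add: g_scale_left g_scale_right power2_eq_square field_simps)
  then have "trS2 ((1 / t) *\<^sub>R x) = c" by (rule trS2_const)
  moreover have "trS2 x = t^6 * trS2 ((1 / t) *\<^sub>R x)"
    using t \<open>g x x < 0\<close> by (simp add: trS2_scale power_one_over field_simps)
  moreover have "t^6 = (t\<^sup>2)^3" by (simp flip: power_mult)
  ultimately show ?thesis using t by simp
qed

lemma trS2_along_spacelike_line:
  assumes u: "g u X = 0" "g u u = 1"
  shows "trS2 (X + r *\<^sub>R u) = c * (1 - r\<^sup>2)^3"
    and "(\<Sum>b\<in>UNIV. \<Sum>j\<in>UNIV. eps i0 b * eps i0 j *
           ((P1 u (e b) (e j))\<^sup>2 + 2 * P0 (e b) (e j) * P2 u (e b) (e j))) = -3 * c"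
proof -
  define p where "p = (\<Sum>b\<in>UNIV. \<Sum>j\<in>UNIV. smult (eps i0 b * eps i0 j)
    ([:P0 (e b) (e j), P1 u (e b) (e j), P2 u (e b) (e j), P3 u (e b) (e j):]^2))"
  have p: "poly p r = trS2 (X + r *\<^sub>R u)" for r
    by (simp only: p_def poly_sum poly_smult poly_cubic_square) (simp add: trS2_def szabo_mat_def DR_along_line)
  define q where "q = smult c [:1, 0, -3, 0, 3, 0, -1:]"
  have q: "poly q r = c * (1 - r\<^sup>2)^3" for r
    by (simp add: q_def power2_eq_square eval_nat_numeral algebra_simps)
  have "p = q"
  proof (rule poly_eq_0_if_vanishes_on_interval[of "-1" 1, THEN right_minus_eq[THEN iffD1]])
    fix r :: real assume "-1 < r" "r < 1"
    then have "1 - r\<^sup>2 > 0" by (simp add: abs_square_less_1)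
    moreover have "g (X + r *\<^sub>R u) (X + r *\<^sub>R u) = - (1 - r\<^sup>2)"
      using u by (simp add: g_add_left g_add_right g_scale_left g_scale_right g_commute[of X u] g_X_X
          power2_eq_square)
    ultimately show "poly (p - q) r = 0"
      by (simp add: p q trS2_timelike)
  qed simp
  then show "trS2 (X + r *\<^sub>R u) = c * (1 - r\<^sup>2)^3"
    using p q by metis
  have "coeff p 2 = -3 * c"
    using \<open>p = q\<close> by (simp add: q_def numeral_2_eq_2)
  then show "(\<Sum>b\<in>UNIV. \<Sum>j\<in>UNIV. eps i0 b * eps i0 j *
           ((P1 u (e b) (e j))\<^sup>2 + 2 * P0 (e b) (e j) * P2 u (e b) (e j))) = -3 * c"
    by (simp only: p_def coeff_sum coeff_smult coeff_cubic_square_2)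
qed

lemma P0_add_P2_orthogonal:
  assumes u: "g u X = 0" "g u u > 0"
    and y: "g y X = 0" "g y u = 0" and w: "g w X = 0" "g w u = 0"
  shows "g u u * P0 y w + P2 u y w = 0"
proof -
  define l where "l = sqrt (g u u)"
  define v where "v = (1 / l) *\<^sub>R u"
  have l: "l > 0" "l\<^sup>2 = g u u" using u(2) by (simp_all add: l_def)
  have v: "g v X = 0" "g v v = 1" "g y v = 0" "g w v = 0"
    using u y w l by (simp_all add: v_def g_scale_left g_scale_right power2_eq_square)
  have null: "DR y (X + s *\<^sub>R v) (X + s *\<^sub>R v) w (X + s *\<^sub>R v) = 0" if "s\<^sup>2 = 1" for s
  proof (rule DR_vanishes_on_orthogonal_if_null)
    show "g (X + s *\<^sub>R v) (X + s *\<^sub>R v) = 0" "g (X + s *\<^sub>R v) X \<noteq> 0"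
      using v that by (simp_all add: g_add_left g_add_right g_scale_left g_scale_right g_X_X
          g_commute[of X v] power2_eq_square)
    show "trS2 (X + s *\<^sub>R v) = 0"
      using trS2_along_spacelike_line(1)[OF v(1,2)] that by simp
    show "g y X = 0" "g y (X + s *\<^sub>R v) = 0" "g w X = 0" "g w (X + s *\<^sub>R v) = 0"
      using y w v by (simp_all add: g_add_right g_scale_right)
  qed
  have "P0 y w + P2 v y w = 0"
    using null[of 1, unfolded DR_along_line] null[of "-1", unfolded DR_along_line] by simp
  moreover have "P2 u y w = l\<^sup>2 * P2 v y w"
    using l P2_scale[of l v] by (simp add: v_def)
  ultimately show ?thesis
    using l(2) by (metis distrib_left mult_zero_right)
qed

lemma P0_add_P2_plane:
  assumes "i \<noteq> j" "i \<noteq> i0" "j \<noteq> i0"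
  shows "P0 (e i) (e j) + P2 (e i) (e i) (e j) + P2 (e j) (e i) (e j) = 0"
proof -
  have "2 * P0 (e i - \<sigma> *\<^sub>R e j) (e i - \<sigma> *\<^sub>R e j) + P2 (e i + \<sigma> *\<^sub>R e j) (e i - \<sigma> *\<^sub>R e j) (e i - \<sigma> *\<^sub>R e j) = 0"
    if "\<sigma>\<^sup>2 = 1" for \<sigma>
    using P0_add_P2_orthogonal[of "e i + \<sigma> *\<^sub>R e j" "e i - \<sigma> *\<^sub>R e j" "e i - \<sigma> *\<^sub>R e j"] assms that
    by (simp add: g_add_left g_add_right g_diff_left g_diff_right g_scale_left g_scale_right
        g_frame eps_def power2_eq_square)
  from this[of 1] this[of "-1"] show ?thesis
    using P2_polarization[of "e i" "e j"] by simp
qed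

lemma sum_P2_spacelike_frame:
  assumes "b \<noteq> i0" "j \<noteq> i0"
  shows "(\<Sum>k\<in>-{i0}. P2 (e k) (e b) (e j)) = - (real (card (-{i0})) - 1) * P0 (e b) (e j)"
proof -
  have "(\<Sum>k\<in>-{i0}. P0 (e b) (e j) + P2 (e k) (e b) (e j)) = (\<Sum>k\<in>{b, j}. P0 (e b) (e j) + P2 (e k) (e b) (e j))"
  proof (rule sum.mono_neutral_right)
    show "\<forall>k\<in>-{i0} - {b, j}. P0 (e b) (e j) + P2 (e k) (e b) (e j) = 0"
    proof
      fix k assume "k \<in> -{i0} - {b, j}"
      then show "P0 (e b) (e j) + P2 (e k) (e b) (e j) = 0"
        using P0_add_P2_orthogonal[of "e k" "e b" "e j"] assms by (auto simp: g_frame eps_def)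
    qed
  qed (use assms in auto)
  also have "\<dots> = P0 (e b) (e j)"
    using P0_add_P2_plane[of b j] assms by (cases "b = j") simp_all
  finally show ?thesis
    by (simp add: sum.distrib algebra_simps)
qed

lemma c_as_frame_sum: "c = (\<Sum>b\<in>-{i0}. \<Sum>j\<in>-{i0}. (P0 (e b) (e j))\<^sup>2)"
proof -
  have "c = trS2 X" using trS2_const g_X_X by simp
  then show ?thesis by (simp add: trS2_def szabo_mat_def sum_eps_eps flip: P0_def)
qed

lemma second_coeff_identity:
  assumes "k \<noteq> i0"
  shows "(\<Sum>b\<in>-{i0}. \<Sum>j\<in>-{i0}. (P1 (e k) (e b) (e j))\<^sup>2 + 2 * P0 (e b) (e j) * P2 (e k) (e b) (e j))
         - 2 * (\<Sum>j\<in>-{i0}. (P0 (e k) (e j))\<^sup>2) = -3 * c"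
proof -
  have "g (e k) X = 0" "g (e k) (e k) = 1" using assms by (simp_all add: g_frame eps_def)
  moreover have "(\<Sum>b\<in>-{i0}. (P0 (e b) (e k))\<^sup>2) = (\<Sum>j\<in>-{i0}. (P0 (e k) (e j))\<^sup>2)"
    by (simp add: P0_sym[of "e k"])
  ultimately show ?thesis
    using trS2_along_spacelike_line(2)[of "e k"] by (simp add: sum_eps_eps P1_X)
qed

lemma c_eq_0: "c = 0"
proof -
  let ?J = "-{i0}"
  define T where "T = (\<Sum>k\<in>?J. \<Sum>b\<in>?J. \<Sum>j\<in>?J. (P1 (e k) (e b) (e j))\<^sup>2)"
  have "T \<ge> 0" "c \<ge> 0"
    unfolding T_def c_as_frame_sum by (simp_all add: sum_nonneg)
  have swap3: "(\<Sum>k\<in>A. \<Sum>b\<in>B. \<Sum>j\<in>C. f k b j) = (\<Sum>b\<in>B. \<Sum>j\<in>C. \<Sum>k\<in>A. f k b j)"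
    for A B C and f :: "'n \<Rightarrow> 'n \<Rightarrow> 'n \<Rightarrow> real"
    by (subst sum.swap) (rule sum.cong[OF refl], rule sum.swap)
  have "(\<Sum>k\<in>?J. \<Sum>b\<in>?J. \<Sum>j\<in>?J. P0 (e b) (e j) * P2 (e k) (e b) (e j))
      = (\<Sum>b\<in>?J. \<Sum>j\<in>?J. P0 (e b) (e j) * (\<Sum>k\<in>?J. P2 (e k) (e b) (e j)))"
    by (subst swap3) (simp add: sum_distrib_left)
  also have "\<dots> = - (real (card ?J) - 1) * c"
    by (simp add: sum_P2_spacelike_frame c_as_frame_sum sum_distrib_left power2_eq_square mult_ac)
  finally have P0_P2: "(\<Sum>k\<in>?J. \<Sum>b\<in>?J. \<Sum>j\<in>?J. P0 (e b) (e j) * P2 (e k) (e b) (e j))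
      = - (real (card ?J) - 1) * c" .
  have "(\<Sum>k\<in>?J. -3 * c) = (\<Sum>k\<in>?J. (\<Sum>b\<in>?J. \<Sum>j\<in>?J.
      (P1 (e k) (e b) (e j))\<^sup>2 + 2 * P0 (e b) (e j) * P2 (e k) (e b) (e j)) - 2 * (\<Sum>j\<in>?J. (P0 (e k) (e j))\<^sup>2))"
    by (rule sum.cong) (simp_all add: second_coeff_identity)
  also have "\<dots> = T + 2 * (\<Sum>k\<in>?J. \<Sum>b\<in>?J. \<Sum>j\<in>?J. P0 (e b) (e j) * P2 (e k) (e b) (e j)) - 2 * c"
    by (simp add: T_def c_as_frame_sum sum.distrib sum_subtractf sum_distrib_left mult.assoc)
  finally have "T + real (card ?J) * c = 0"
    by (simp add: P0_P2 algebra_simps)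
  moreover have "real (card ?J) * c \<ge> 0"
    using \<open>c \<ge> 0\<close> by simp
  ultimately have "real (card ?J) * c = 0"
    using \<open>T \<ge> 0\<close> by linarith
  then show ?thesis
    by (cases "?J = {}") (simp_all add: c_as_frame_sum)
qed

lemma DR_vanishes: "DR y x x w x = 0"
proof -
  have timelike_0: "DR y z z w z = 0" if "g z z < 0" for z
    using DR_vanishes_if_timelike[OF that] trS2_timelike[OF that] c_eq_0 by simp
  obtain \<delta> where "\<delta> > 0" and \<delta>: "\<And>t. \<bar>t\<bar> < \<delta> \<Longrightarrow> g (X + t *\<^sub>R x) (X + t *\<^sub>R x) < 0"
    using timelike_near_X by blast
  have "[:P0 y w, P1 x y w, P2 x y w, P3 x y w:] = 0"
  proof (rule poly_eq_0_if_vanishes_on_interval[of "-\<delta>" \<delta>])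
    fix t assume "-\<delta> < t" "t < \<delta>"
    then have "DR y (X + t *\<^sub>R x) (X + t *\<^sub>R x) w (X + t *\<^sub>R x) = 0"
      using \<delta> by (intro timelike_0) simp
    then show "poly [:P0 y w, P1 x y w, P2 x y w, P3 x y w:] t = 0"
      by (simp add: DR_along_line power2_eq_square eval_nat_numeral algebra_simps)
  qed (use \<open>\<delta> > 0\<close> in simp)
  then show ?thesis by (simp add: P3_def)
qed

end

theorem lemma3p1:
  fixes g :: "real^'n \<Rightarrow> real^'n \<Rightarrow> real"
    and DR :: "real^'n \<Rightarrow> real^'n \<Rightarrow> real^'n \<Rightarrow> real^'n \<Rightarrow> real^'n \<Rightarrow> real"
  assumes "lorentzian g"
    and "CARD('n) \<ge> 3"
    and "cov_deriv_acT DR"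
    and "\<exists>c. \<forall>x. g x x = -1 \<longrightarrow> lin_trace (szabo g DR x \<circ> szabo g DR x) = c"
  shows "\<forall>x. szabo g DR x = (\<lambda>y. 0)"
proof -
  have g: "linear (\<lambda>x. g x y)" "g x y = g y x" for x y
    using assms(1) unfolding lorentzian_def by blast+
  obtain e :: "'n \<Rightarrow> real^'n" and i0 where frame:
      "inj e" "span (range e) = UNIV"
      "\<forall>i j. g (e i) (e j) = (if i = j then (if i = i0 then -1 else 1) else 0)"
    using assms(1) unfolding lorentzian_def by blast
  interpret szabo_frame g e i0 DR
    by (intro szabo_frame.intro lorentz_frame.intro szabo_frame_axioms.intro)
      (use g frame assms(3) in \<open>simp_all add: eps_def\<close>)
  obtain c where "\<forall>x. g x x = -1 \<longrightarrow> lin_trace (szabo g DR x \<circ> szabo g DR x) = c"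
    using assms(4) by blast
  then interpret szabo_trace_const g e i0 DR c
    by unfold_locales (simp add: lin_trace_szabo_sq)
  show ?thesis
    by (simp add: szabo_eq_S S_def DR_vanishes fun_eq_iff)
qed

end
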